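(* Let $A\in\mathbb{R}^{n\times n}$, $B\in\mathbb{R}^n$ with $(A,B)$ controllable, $\mathcal{C}=(B\;AB\;\cdots\;A^{n-1}B)$, and suppose $e_n^T\mathcal{C}^{-1}=C_{n-1}C_{n-2}\cdots C_1$ with $C_k\in\mathbb{R}^{(n-k)\times(n-k+1)}$ for $k=1,\dots,n-1$. Let $\Phi(s)=s^n+p_1s^{n-1}+\dots+p_{n-1}s+p_n$ be a real polynomial. Put $A_1=A$ and $A_k=C_{k-1}C_{k-2}\cdots C_1A^k$ for $k=2,\dots,n$. Define $$K_0=p_nI_n,\qquad K_k=C_k\,(A_k\,p_{n-k}+K_{k-1})\quad(k=1,\dots,n-1),\qquad K=A_n+K_{n-1}.$$ Then $K=e_n^T\mathcal{C}^{-1}\Phi(A)$ and $\det(sI-A+BK)=\Phi(s)$.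
   Context: $e_n$ is the $n$-th canonical basis vector; $K_k$ is an $(n-k)\times n$ matrix and $K$ a row vector. *)

theory Defs
  imports "Jordan_Normal_Form.Jordan_Normal_Form"
          "Jordan_Normal_Form.Gauss_Jordan_Elimination"
          "Jordan_Normal_Form.DL_Rank"
begin

text \<open>Matrices are JNF matrices of type real mat with explicit dimensions.
  A is n x n, B is n x 1 (a column), C k is (n-k) x (n-k+1).\<close>

definition ctrb_mat :: "nat \<Rightarrow> real mat \<Rightarrow> real mat \<Rightarrow> real mat" where
  "ctrb_mat n A B = mat n n (\<lambda>(i, j). ((A ^\<^sub>m j) * B) $$ (i, 0))"

definition controllable :: "nat \<Rightarrow> real mat \<Rightarrow> real mat \<Rightarrow> bool" where
  "controllable n A B \<longleftrightarrow> vec_space.rank n (ctrb_mat n A B) = n"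

definition en_row :: "nat \<Rightarrow> real mat" where
  "en_row n = mat 1 n (\<lambda>(i, j). if j = n - 1 then 1 else 0)"

fun Cprod :: "(nat \<Rightarrow> real mat) \<Rightarrow> nat \<Rightarrow> nat \<Rightarrow> real mat" where
  "Cprod C n 0 = 1\<^sub>m n"
| "Cprod C n (Suc k) = C (Suc k) * Cprod C n k"

definition Amat :: "(nat \<Rightarrow> real mat) \<Rightarrow> nat \<Rightarrow> real mat \<Rightarrow> nat \<Rightarrow> real mat" where
  "Amat C n A k = (if k = 1 then A else Cprod C n (k - 1) * A ^\<^sub>m k)"

fun Kseq :: "(nat \<Rightarrow> real mat) \<Rightarrow> nat \<Rightarrow> real mat \<Rightarrow> (nat \<Rightarrow> real) \<Rightarrow> nat \<Rightarrow> real mat" where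
  "Kseq C n A p 0 = p n \<cdot>\<^sub>m 1\<^sub>m n"
| "Kseq C n A p (Suc k) =
     C (Suc k) * (p (n - Suc k) \<cdot>\<^sub>m Amat C n A (Suc k) + Kseq C n A p k)"

definition Kgain :: "(nat \<Rightarrow> real mat) \<Rightarrow> nat \<Rightarrow> real mat \<Rightarrow> (nat \<Rightarrow> real) \<Rightarrow> real mat" where
  "Kgain C n A p = Amat C n A n + Kseq C n A p (n - 1)"

definition Phi :: "nat \<Rightarrow> (nat \<Rightarrow> real) \<Rightarrow> real \<Rightarrow> real" where
  "Phi n p s = s ^ n + (\<Sum>i = 1..n. p i * s ^ (n - i))"

definition Phi_mat :: "nat \<Rightarrow> (nat \<Rightarrow> real) \<Rightarrow> real mat \<Rightarrow> real mat" where
  "Phi_mat n p A = mat n n (\<lambda>(i, j).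
     (A ^\<^sub>m n) $$ (i, j) + (\<Sum>k = 1..n. p k * (A ^\<^sub>m (n - k)) $$ (i, j)))"

end

theory Submission imports Defs begin

text \<open>Put q = e_n^T C^-1. From q C = e_n^T, the Markov parameters q A^m B vanish for
  m < n - 1 and equal 1 for m = n - 1. Hence the matrix T with rows q, qA, ..., qA^(n-1) is
  invertible, and for K = q Phi(A) one has T (sI - A + BK) = N(s) T, where N(s) is sI minus the
  companion matrix of Phi; so det (sI - A + BK) = det N(s) = Phi(s) (Ackermann's formula).
  The recursion for K_k unfolds to K_k = C_k ... C_1 (p_n I + p_(n-1) A + ... + p_(n-k) A^k),
  which for k = n - 1 is K = q Phi(A).\<close>

lemma index_mult_mat_sum:
  "X \<in> carrier_mat r n \<Longrightarrow> Y \<in> carrier_mat n m \<Longrightarrow> i < r \<Longrightarrow> j < m \<Longrightarrow>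
   (X * Y) $$ (i, j) = (\<Sum>t<n. X $$ (i, t) * Y $$ (t, j))"
  by (simp add: scalar_prod_def atLeast0LessThan)

lemma pow_mat_add:
  assumes A: "A \<in> carrier_mat n n"
  shows "A ^\<^sub>m (i + d) = A ^\<^sub>m i * A ^\<^sub>m d"
proof (induction d)
  case (Suc d)
  have "A ^\<^sub>m (i + Suc d) = A ^\<^sub>m i * A ^\<^sub>m d * A" using Suc by simp
  also have "\<dots> = A ^\<^sub>m i * (A ^\<^sub>m d * A)" using A by (simp add: assoc_mult_mat[of _ n n _ n _ n])
  finally show ?case by simp
qed (use A in simp)

lemma sum_atLeast1_atMost_reverse: "(\<Sum>k = 1..(n::nat). f k) = (\<Sum>l<n. f (n - l))"
  by (rule sum.reindex_bij_witness[of _ "\<lambda>l. n - l" "\<lambda>k. n - k"]) auto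

section \<open>The companion pencil\<close>

text \<open>sI - F, where the companion matrix F of Phi has ones on the superdiagonal and last row
  -p_n, ..., -p_1.\<close>
definition companion_pencil :: "nat \<Rightarrow> (nat \<Rightarrow> real) \<Rightarrow> real \<Rightarrow> real mat" where
  "companion_pencil n p s = mat n n (\<lambda>(i, l). (if i = l then s else 0) - (if l = Suc i then 1 else 0)
       + (if i = n - 1 then p (n - l) else 0))"

definition power_column_mat :: "nat \<Rightarrow> real \<Rightarrow> real mat" where
  "power_column_mat n s = mat n n (\<lambda>(i, j). if i = j then 1 else if j = 0 then s ^ i else 0)"

lemma companion_pencil_carrier[simp]: "companion_pencil n p s \<in> carrier_mat n n"
  by (simp add: companion_pencil_def)

lemma power_column_mat_carrier[simp]: "power_column_mat n s \<in> carrier_mat n n"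
  by (simp add: power_column_mat_def)

lemma det_power_column_mat: "det (power_column_mat n s) = 1"
  by (subst det_lower_triangular[OF _ power_column_mat_carrier])
     (auto simp: power_column_mat_def prod_list_diag_prod)

text \<open>Adding s^l times column l to column 0 for every l turns column 0 into (0, ..., 0, Phi(s)).\<close>
lemma companion_pencil_power_column_0:
  assumes n: "n \<ge> 1" and i: "i < n"
  shows "(companion_pencil n p s * power_column_mat n s) $$ (i, 0)
    = (if i = n - 1 then s ^ n + (\<Sum>l<n. p (n - l) * s ^ l) else 0)"
proof -
  have "(companion_pencil n p s * power_column_mat n s) $$ (i, 0)
      = (\<Sum>l<n. (if i = l then s * s ^ l else 0) - (if l = Suc i then s ^ l else 0)
          + (if i = n - 1 then p (n - l) * s ^ l else 0))"
    using i n index_mult_mat_sum[OF companion_pencil_carrier power_column_mat_carrier, of i n 0 p s]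
    by (simp only:) (intro sum.cong; auto simp: power_column_mat_def companion_pencil_def algebra_simps)
  also have "\<dots> = (if i = n - 1 then s ^ n + (\<Sum>l<n. p (n - l) * s ^ l) else 0)"
    using i n by (cases n) (auto simp: sum.distrib sum_subtractf sum.If_cases)
  finally show ?thesis .
qed

lemma companion_pencil_power_column:
  assumes i: "i < n" and j: "j < n" "j \<noteq> 0"
  shows "(companion_pencil n p s * power_column_mat n s) $$ (i, j) = companion_pencil n p s $$ (i, j)"
proof -
  have "(companion_pencil n p s * power_column_mat n s) $$ (i, j)
      = (\<Sum>l<n. if l = j then companion_pencil n p s $$ (i, l) else 0)"
    using i j index_mult_mat_sum[OF companion_pencil_carrier power_column_mat_carrier, of i n j p s]
    by (simp only:) (intro sum.cong; auto simp: power_column_mat_def)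
  then show ?thesis using j by simp
qed

lemma det_companion_pencil:
  assumes n: "n \<ge> 1"
  shows "det (companion_pencil n p s) = s ^ n + (\<Sum>l<n. p (n - l) * s ^ l)"
proof -
  define M where "M = companion_pencil n p s * power_column_mat n s"
  define \<Phi> where "\<Phi> = s ^ n + (\<Sum>l<n. p (n - l) * s ^ l)"
  have M: "M \<in> carrier_mat n n" unfolding M_def by (rule mult_carrier_mat[of _ n n]) simp_all
  define D where "D = mat_delete M (n - 1) 0"
  have D: "D \<in> carrier_mat (n - 1) (n - 1)" unfolding D_def using mat_delete_carrier[OF M] .
  have D_index: "D $$ (i, j) = (if i = Suc j then s else 0) - (if j = i then 1 else 0)"
    if "i < n - 1" "j < n - 1" for i j
  proof -
    have "D $$ (i, j) = M $$ (i, Suc j)" using that M by (simp add: D_def mat_delete_def)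
    also have "\<dots> = companion_pencil n p s $$ (i, Suc j)"
      unfolding M_def using that by (intro companion_pencil_power_column) auto
    finally show ?thesis using that by (simp add: companion_pencil_def)
  qed
  have "det D = (\<Prod>i = 0..<n - 1. D $$ (i, i))"
    using D by (subst det_lower_triangular[OF _ D]) (auto simp: D_index prod_list_diag_prod)
  also have "\<dots> = (-1) ^ (n - 1)" by (simp add: D_index)
  finally have det_D: "det D = (-1) ^ (n - 1)" .
  have "det M = (\<Sum>i<n. M $$ (i, 0) * cofactor M i 0)"
    using laplace_expansion_column[OF M, of 0] n by auto
  also have "\<dots> = (\<Sum>i<n. if i = n - 1 then \<Phi> * cofactor M i 0 else 0)"
    using n by (intro sum.cong) (auto simp: M_def \<Phi>_def companion_pencil_power_column_0)
  also have "\<dots> = \<Phi> * cofactor M (n - 1) 0" using n by simp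
  also have "\<dots> = \<Phi>"
    unfolding cofactor_def D_def[symmetric] det_D by (simp add: power_add[symmetric])
  finally show ?thesis
    using det_mult[OF companion_pencil_carrier power_column_mat_carrier]
    by (simp add: M_def \<Phi>_def det_power_column_mat)
qed

section \<open>The gain recursion\<close>

fun Phi_trunc :: "nat \<Rightarrow> (nat \<Rightarrow> real) \<Rightarrow> real mat \<Rightarrow> nat \<Rightarrow> real mat" where
  "Phi_trunc n p A 0 = p n \<cdot>\<^sub>m 1\<^sub>m n"
| "Phi_trunc n p A (Suc k) = p (n - Suc k) \<cdot>\<^sub>m A ^\<^sub>m Suc k + Phi_trunc n p A k"

lemma Phi_trunc_dim[simp]: "dim_row (Phi_trunc n p A k) = n \<and> dim_col (Phi_trunc n p A k) = n"
  by (induction k) simp_all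

lemma Phi_trunc_carrier: "Phi_trunc n p A k \<in> carrier_mat n n"
  by (rule carrier_matI) simp_all

lemma Phi_trunc_index:
  assumes A: "A \<in> carrier_mat n n" and ij: "i < n" "j < n"
  shows "Phi_trunc n p A k $$ (i, j) = (\<Sum>l\<le>k. p (n - l) * (A ^\<^sub>m l) $$ (i, j))"
proof (induction k)
  case 0
  show ?case using ij by (simp add: carrier_matD[OF A])
next
  case (Suc k)
  have "Phi_trunc n p A (Suc k) $$ (i, j) = p (n - Suc k) * (A ^\<^sub>m Suc k) $$ (i, j) + Phi_trunc n p A k $$ (i, j)"
    using ij by (simp del: pow_mat.simps(2) add: carrier_matD[OF A])
  then show ?case by (simp only: Suc.IH sum.atMost_Suc add.commute)
qed

lemma Phi_mat_carrier[simp]: "Phi_mat n p A \<in> carrier_mat n n"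
  by (simp add: Phi_mat_def)

lemma Phi_mat_index:
  assumes "i < n" "j < n"
  shows "Phi_mat n p A $$ (i, j) = (A ^\<^sub>m n) $$ (i, j) + (\<Sum>l<n. p (n - l) * (A ^\<^sub>m l) $$ (i, j))"
  using assms unfolding Phi_mat_def sum_atLeast1_atMost_reverse
  by (auto intro!: sum.cong simp: diff_diff_cancel less_imp_le)

lemma Phi_mat_eq_Phi_trunc:
  assumes n: "n \<ge> 1" and A: "A \<in> carrier_mat n n"
  shows "Phi_mat n p A = A ^\<^sub>m n + Phi_trunc n p A (n - 1)"
proof (rule eq_matI)
  fix i j assume "i < dim_row (A ^\<^sub>m n + Phi_trunc n p A (n - 1))"
    "j < dim_col (A ^\<^sub>m n + Phi_trunc n p A (n - 1))"
  then have ij: "i < n" "j < n" using A by auto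
  have "{..n - 1} = {..<n}" using n by auto
  then show "Phi_mat n p A $$ (i, j) = (A ^\<^sub>m n + Phi_trunc n p A (n - 1)) $$ (i, j)"
    using ij A by (simp add: Phi_mat_index Phi_trunc_index)
qed (use A in \<open>auto simp: Phi_mat_def\<close>)

lemma Cprod_carrier:
  assumes Cdim: "\<And>k. 1 \<le> k \<Longrightarrow> k \<le> n - 1 \<Longrightarrow> C k \<in> carrier_mat (n - k) (n - k + 1)"
  shows "k \<le> n - 1 \<Longrightarrow> Cprod C n k \<in> carrier_mat (n - k) n"
proof (induction k)
  case (Suc k)
  have "C (Suc k) \<in> carrier_mat (n - Suc k) (n - k)"
    using Cdim[of "Suc k"] Suc.prems by (simp add: Suc_diff_Suc)
  with Suc show ?case by auto
qed simp

lemma Amat_eq: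
  assumes "A \<in> carrier_mat n n" and "k \<ge> 1"
  shows "Amat C n A k = Cprod C n (k - 1) * A ^\<^sub>m k"
  using assms by (auto simp: Amat_def)

lemma Kseq_eq_Cprod_Phi_trunc:
  assumes A: "A \<in> carrier_mat n n"
    and Cdim: "\<And>k. 1 \<le> k \<Longrightarrow> k \<le> n - 1 \<Longrightarrow> C k \<in> carrier_mat (n - k) (n - k + 1)"
  shows "k \<le> n - 1 \<Longrightarrow> Kseq C n A p k = Cprod C n k * Phi_trunc n p A k"
proof (induction k)
  case (Suc k)
  have Ck: "Cprod C n k \<in> carrier_mat (n - k) n" using Cprod_carrier[OF Cdim] Suc.prems by simp
  have Ak: "A ^\<^sub>m Suc k \<in> carrier_mat n n" using pow_carrier_mat[OF A] .
  have S: "Phi_trunc n p A k \<in> carrier_mat n n" by (rule Phi_trunc_carrier)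
  have C: "C (Suc k) \<in> carrier_mat (n - Suc k) (n - k)"
    using Cdim[of "Suc k"] Suc.prems by (simp add: Suc_diff_Suc)
  have "Kseq C n A p (Suc k)
      = C (Suc k) * (p (n - Suc k) \<cdot>\<^sub>m (Cprod C n k * A ^\<^sub>m Suc k) + Cprod C n k * Phi_trunc n p A k)"
    using Suc Amat_eq[OF A, of "Suc k"] by simp
  also have "\<dots> = C (Suc k) * (Cprod C n k * Phi_trunc n p A (Suc k))"
    using mult_add_distrib_mat[OF Ck smult_carrier_mat[OF Ak] S] mult_smult_distrib[OF Ck Ak] by simp
  also have "\<dots> = Cprod C n (Suc k) * Phi_trunc n p A (Suc k)"
    using assoc_mult_mat[OF C Ck Phi_trunc_carrier[of n p A "Suc k"]] by simp
  finally show ?case .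
qed simp

lemma Kgain_eq:
  assumes n: "n \<ge> 1" and A: "A \<in> carrier_mat n n"
    and Cdim: "\<And>k. 1 \<le> k \<Longrightarrow> k \<le> n - 1 \<Longrightarrow> C k \<in> carrier_mat (n - k) (n - k + 1)"
  shows "Kgain C n A p = Cprod C n (n - 1) * Phi_mat n p A"
proof -
  have q: "Cprod C n (n - 1) \<in> carrier_mat 1 n" using Cprod_carrier[OF Cdim, of "n - 1"] n by simp
  have "Kgain C n A p = Cprod C n (n - 1) * A ^\<^sub>m n + Cprod C n (n - 1) * Phi_trunc n p A (n - 1)"
    unfolding Kgain_def using Amat_eq[OF A n] Kseq_eq_Cprod_Phi_trunc[OF A Cdim] by simp
  also have "\<dots> = Cprod C n (n - 1) * Phi_mat n p A"
    using mult_add_distrib_mat[OF q pow_carrier_mat[OF A] Phi_trunc_carrier]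
    by (simp add: Phi_mat_eq_Phi_trunc[OF n A])
  finally show ?thesis .
qed

section \<open>Ackermann's formula\<close>

definition obsv_mat :: "nat \<Rightarrow> real mat \<Rightarrow> real mat \<Rightarrow> real mat" where
  "obsv_mat n q A = mat n n (\<lambda>(i, j). (q * A ^\<^sub>m i) $$ (0, j))"

lemma obsv_mat_carrier[simp]: "obsv_mat n q A \<in> carrier_mat n n"
  by (simp add: obsv_mat_def)

lemma mult_pow_mat_assoc:
  assumes q: "q \<in> carrier_mat r n" and A: "A \<in> carrier_mat n n" and B: "B \<in> carrier_mat n k"
  shows "q * A ^\<^sub>m (i + d) * B = q * A ^\<^sub>m i * (A ^\<^sub>m d * B)"
  using assoc_mult_mat[OF q pow_carrier_mat[OF A] pow_carrier_mat[OF A], of i d]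
    assoc_mult_mat[OF mult_carrier_mat[OF q pow_carrier_mat[OF A]] pow_carrier_mat[OF A] B, of i d]
  by (simp add: pow_mat_add[OF A])

lemma ctrb_mat_markov:
  assumes A: "A \<in> carrier_mat n n" and B: "B \<in> carrier_mat n 1" and q: "q \<in> carrier_mat 1 n"
    and qC: "q * ctrb_mat n A B = en_row n" and m: "m < n"
  shows "(q * A ^\<^sub>m m * B) $$ (0, 0) = (if m = n - 1 then 1 else 0)"
proof -
  have AB: "A ^\<^sub>m m * B \<in> carrier_mat n 1" using mult_carrier_mat[OF pow_carrier_mat[OF A] B] .
  have Ct: "ctrb_mat n A B \<in> carrier_mat n n" by (simp add: ctrb_mat_def)
  have "(q * A ^\<^sub>m m * B) $$ (0, 0) = (\<Sum>t<n. q $$ (0, t) * (A ^\<^sub>m m * B) $$ (t, 0))"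
    using assoc_mult_mat[OF q pow_carrier_mat[OF A] B] index_mult_mat_sum[OF q AB] by simp
  also have "\<dots> = (q * ctrb_mat n A B) $$ (0, m)"
    using m index_mult_mat_sum[OF q Ct] by (simp add: ctrb_mat_def)
  finally show ?thesis using qC m by (simp add: en_row_def)
qed

text \<open>Multiplying by the Krylov matrix with columns A^(n-1) B, ..., AB, B gives a lower
  unitriangular matrix.\<close>
lemma det_obsv_mat_nonzero:
  assumes A: "A \<in> carrier_mat n n" and B: "B \<in> carrier_mat n 1" and q: "q \<in> carrier_mat 1 n"
    and markov: "\<And>m. m < n \<Longrightarrow> (q * A ^\<^sub>m m * B) $$ (0, 0) = (if m = n - 1 then 1 else 0)"
  shows "det (obsv_mat n q A) \<noteq> 0"
proof -
  define W where "W = mat n n (\<lambda>(i, j). (A ^\<^sub>m (n - 1 - j) * B) $$ (i, 0))"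
  have W: "W \<in> carrier_mat n n" by (simp add: W_def)
  have TW: "(obsv_mat n q A * W) $$ (i, j) = (if j < i then (q * A ^\<^sub>m (i + (n - 1 - j)) * B) $$ (0, 0)
      else if j = i then 1 else 0)" if ij: "i < n" "j < n" for i j
  proof -
    have qA: "q * A ^\<^sub>m i \<in> carrier_mat 1 n" using mult_carrier_mat[OF q pow_carrier_mat[OF A]] .
    have AB: "A ^\<^sub>m (n - 1 - j) * B \<in> carrier_mat n 1"
      using mult_carrier_mat[OF pow_carrier_mat[OF A] B] .
    have "(obsv_mat n q A * W) $$ (i, j) = (q * A ^\<^sub>m i * (A ^\<^sub>m (n - 1 - j) * B)) $$ (0, 0)"
      using ij index_mult_mat_sum[OF obsv_mat_carrier W ij] index_mult_mat_sum[OF qA AB]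
      by (simp add: obsv_mat_def W_def)
    also have "\<dots> = (q * A ^\<^sub>m (i + (n - 1 - j)) * B) $$ (0, 0)"
      by (simp add: mult_pow_mat_assoc[OF q A B])
    finally show ?thesis using ij markov[of "i + (n - 1 - j)"] by auto
  qed
  have TW_carrier: "obsv_mat n q A * W \<in> carrier_mat n n"
    using mult_carrier_mat[OF obsv_mat_carrier W] .
  have "det (obsv_mat n q A * W) = (\<Prod>i = 0..<n. (obsv_mat n q A * W) $$ (i, i))"
    by (subst det_lower_triangular[OF _ TW_carrier])
       (auto simp: TW prod_list_diag_prod carrier_matD[OF obsv_mat_carrier])
  also have "\<dots> = 1" by (simp add: TW)
  finally have "det (obsv_mat n q A * W) = 1" .
  then show ?thesis using det_mult[OF obsv_mat_carrier W] by auto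
qed

lemma index_mult_Phi_mat:
  assumes q: "q \<in> carrier_mat 1 n" and A: "A \<in> carrier_mat n n" and j: "j < n"
  shows "(q * Phi_mat n p A) $$ (0, j)
    = (q * A ^\<^sub>m n) $$ (0, j) + (\<Sum>l<n. p (n - l) * (q * A ^\<^sub>m l) $$ (0, j))"
proof -
  have "(q * Phi_mat n p A) $$ (0, j)
      = (\<Sum>t<n. q $$ (0, t) * (A ^\<^sub>m n) $$ (t, j))
        + (\<Sum>t<n. \<Sum>l<n. p (n - l) * (q $$ (0, t) * (A ^\<^sub>m l) $$ (t, j)))"
    using j by (simp add: index_mult_mat_sum[OF q Phi_mat_carrier] Phi_mat_index
        distrib_left sum.distrib sum_distrib_left mult.left_commute)
  also have "(\<Sum>t<n. \<Sum>l<n. p (n - l) * (q $$ (0, t) * (A ^\<^sub>m l) $$ (t, j)))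
      = (\<Sum>l<n. p (n - l) * (\<Sum>t<n. q $$ (0, t) * (A ^\<^sub>m l) $$ (t, j)))"
    by (subst sum.swap) (simp add: sum_distrib_left)
  finally show ?thesis
    using j by (simp add: index_mult_mat_sum[OF q pow_carrier_mat[OF A]])
qed

lemma index_row_mult_closed_loop:
  fixes R A B K :: "'a :: comm_ring_1 mat"
  assumes R: "R \<in> carrier_mat 1 n" and A: "A \<in> carrier_mat n n" and B: "B \<in> carrier_mat n 1"
    and K: "K \<in> carrier_mat 1 n" and j: "j < n"
  shows "(R * (s \<cdot>\<^sub>m 1\<^sub>m n - A + B * K)) $$ (0, j)
    = s * R $$ (0, j) - (R * A) $$ (0, j) + (R * B) $$ (0, 0) * K $$ (0, j)"
proof -
  have M: "s \<cdot>\<^sub>m 1\<^sub>m n - A + B * K \<in> carrier_mat n n"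
    using A mult_carrier_mat[OF B K] by simp
  have "(R * (s \<cdot>\<^sub>m 1\<^sub>m n - A + B * K)) $$ (0, j)
      = (\<Sum>t<n. R $$ (0, t) * (s \<cdot>\<^sub>m 1\<^sub>m n - A + B * K) $$ (t, j))"
    by (rule index_mult_mat_sum[OF R M]) (use j in auto)
  also have "\<dots> = (\<Sum>t<n. (if t = j then s * R $$ (0, t) else 0) - R $$ (0, t) * A $$ (t, j)
          + R $$ (0, t) * B $$ (t, 0) * K $$ (0, j))"
    using j A B K by (intro sum.cong) (auto simp: scalar_prod_def algebra_simps)
  also have "\<dots> = s * R $$ (0, j) - (R * A) $$ (0, j) + (R * B) $$ (0, 0) * K $$ (0, j)"
    using j by (simp add: index_mult_mat_sum[OF R A] index_mult_mat_sum[OF R B] sum.distrib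
        sum_subtractf sum_distrib_right)
  finally show ?thesis .
qed

lemma index_companion_pencil_mult:
  assumes X: "X \<in> carrier_mat n m" and ij: "i < n" "j < m"
  shows "(companion_pencil n p s * X) $$ (i, j) = s * X $$ (i, j)
    - (if Suc i < n then X $$ (Suc i, j) else 0)
    + (if i = n - 1 then (\<Sum>l<n. p (n - l) * X $$ (l, j)) else 0)"
proof -
  have "(companion_pencil n p s * X) $$ (i, j) = (\<Sum>l<n. companion_pencil n p s $$ (i, l) * X $$ (l, j))"
    by (rule index_mult_mat_sum[OF companion_pencil_carrier X ij])
  also have "\<dots> = (\<Sum>l<n. (if l = i then s * X $$ (l, j) else 0) - (if l = Suc i then X $$ (l, j) else 0)
          + (if i = n - 1 then p (n - l) * X $$ (l, j) else 0))"
    using ij by (intro sum.cong) (auto simp: companion_pencil_def algebra_simps)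
  finally show ?thesis using ij by (simp add: sum.distrib sum_subtractf)
qed

text \<open>The rows q A^i of the observability matrix turn the closed loop into companion form:
  row i < n - 1 is mapped to s q A^i - q A^(i+1) because q A^i B = 0, and the last row picks up
  q A^n from the gain, leaving the coefficients of Phi.\<close>
lemma obsv_mat_closed_loop:
  assumes n: "n \<ge> 1" and A: "A \<in> carrier_mat n n" and B: "B \<in> carrier_mat n 1"
    and q: "q \<in> carrier_mat 1 n"
    and markov: "\<And>m. m < n \<Longrightarrow> (q * A ^\<^sub>m m * B) $$ (0, 0) = (if m = n - 1 then 1 else 0)"
  shows "obsv_mat n q A * (s \<cdot>\<^sub>m 1\<^sub>m n - A + B * (q * Phi_mat n p A))
    = companion_pencil n p s * obsv_mat n q A" (is "obsv_mat n q A * ?M = _")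
proof (rule eq_matI)
  fix i j assume "i < dim_row (companion_pencil n p s * obsv_mat n q A)"
    "j < dim_col (companion_pencil n p s * obsv_mat n q A)"
  then have ij: "i < n" "j < n" by (simp_all add: companion_pencil_def obsv_mat_def)
  have qA: "q * A ^\<^sub>m i \<in> carrier_mat 1 n" using mult_carrier_mat[OF q pow_carrier_mat[OF A]] .
  have K: "q * Phi_mat n p A \<in> carrier_mat 1 n" using mult_carrier_mat[OF q Phi_mat_carrier] .
  have M: "?M \<in> carrier_mat n n" using A mult_carrier_mat[OF B K] by simp
  have lhs: "(obsv_mat n q A * ?M) $$ (i, j) = s * (q * A ^\<^sub>m i) $$ (0, j) - (q * A ^\<^sub>m Suc i) $$ (0, j)
      + (q * A ^\<^sub>m i * B) $$ (0, 0) * (q * Phi_mat n p A) $$ (0, j)"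
    using ij index_mult_mat_sum[OF obsv_mat_carrier M ij] index_mult_mat_sum[OF qA M _ ij(2)]
      index_row_mult_closed_loop[OF qA A B K ij(2)] assoc_mult_mat[OF q pow_carrier_mat[OF A] A, of i]
    by (simp add: obsv_mat_def)
  have rhs: "(companion_pencil n p s * obsv_mat n q A) $$ (i, j) = s * (q * A ^\<^sub>m i) $$ (0, j)
      - (if Suc i < n then (q * A ^\<^sub>m Suc i) $$ (0, j) else 0)
      + (if i = n - 1 then (\<Sum>l<n. p (n - l) * (q * A ^\<^sub>m l) $$ (0, j)) else 0)"
    using index_companion_pencil_mult[OF obsv_mat_carrier ij] ij by (simp add: obsv_mat_def)
  show "(obsv_mat n q A * ?M) $$ (i, j) = (companion_pencil n p s * obsv_mat n q A) $$ (i, j)"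
  proof (cases "i = n - 1")
    case True
    then have "Suc i = n" using n by simp
    then show ?thesis unfolding lhs rhs
      using True markov[OF ij(1)] index_mult_Phi_mat[OF q A ij(2)] by simp
  next
    case False
    then show ?thesis unfolding lhs rhs using ij markov[OF ij(1)] by simp
  qed
qed (simp_all add: companion_pencil_def obsv_mat_def Phi_mat_def)

lemma ackermann_char_poly:
  assumes n: "n \<ge> 1" and A: "A \<in> carrier_mat n n" and B: "B \<in> carrier_mat n 1"
    and q: "q \<in> carrier_mat 1 n" and qC: "q * ctrb_mat n A B = en_row n"
  shows "det (s \<cdot>\<^sub>m 1\<^sub>m n - A + B * (q * Phi_mat n p A)) = Phi n p s"
proof -
  note markov = ctrb_mat_markov[OF A B q qC]
  define M where "M = s \<cdot>\<^sub>m 1\<^sub>m n - A + B * (q * Phi_mat n p A)"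
  have M: "M \<in> carrier_mat n n"
    using A mult_carrier_mat[OF B mult_carrier_mat[OF q Phi_mat_carrier]] by (simp add: M_def)
  have "det (obsv_mat n q A) * det M = det (obsv_mat n q A * M)"
    using det_mult[OF obsv_mat_carrier M] by simp
  also have "\<dots> = det (companion_pencil n p s * obsv_mat n q A)"
    using obsv_mat_closed_loop[OF n A B q markov, of s p] unfolding M_def by simp
  also have "\<dots> = det (companion_pencil n p s) * det (obsv_mat n q A)"
    by (rule det_mult[OF companion_pencil_carrier obsv_mat_carrier])
  finally have "det (obsv_mat n q A) * det M = det (companion_pencil n p s) * det (obsv_mat n q A)" .
  then have "det M = det (companion_pencil n p s)"
    using det_obsv_mat_nonzero[OF A B q markov] by simp
  also have "\<dots> = Phi n p s"
    unfolding det_companion_pencil[OF n] Phi_def sum_atLeast1_atMost_reverse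
    by (auto intro!: sum.cong)
  finally show ?thesis by (simp add: M_def)
qed

section \<open>Pole placement\<close>

lemma det_ctrb_mat_nonzero: "controllable n A B \<Longrightarrow> det (ctrb_mat n A B) \<noteq> 0"
  using vec_space.det_rank_iff[of "ctrb_mat n A B" n] by (simp add: controllable_def ctrb_mat_def)

lemma mult_the_mat_inverse_cancel:
  fixes X :: "'a :: field mat"
  assumes X: "X \<in> carrier_mat n n" and det: "det X \<noteq> 0" and R: "R \<in> carrier_mat m n"
  shows "R * the (mat_inverse X) * X = R"
proof -
  obtain Y where Y: "mat_inverse X = Some Y"
    using mat_inverse(1)[OF X, of "()"] det_non_zero_imp_unit[OF X det, of "()"] by fastforce
  then have "Y * X = 1\<^sub>m n" "Y \<in> carrier_mat n n" using mat_inverse(2)[OF X] by auto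
  then show ?thesis using Y assoc_mult_mat[OF R _ X, of Y] R by simp
qed

theorem mainTheorem4:
  fixes n :: nat and A B :: "real mat" and C :: "nat \<Rightarrow> real mat" and p :: "nat \<Rightarrow> real"
  assumes n: "n \<ge> 1"
    and A: "A \<in> carrier_mat n n"
    and B: "B \<in> carrier_mat n 1"
    and ctrl: "controllable n A B"
    and Cdim: "\<And>k. 1 \<le> k \<Longrightarrow> k \<le> n - 1 \<Longrightarrow> C k \<in> carrier_mat (n - k) (n - k + 1)"
    and factor: "en_row n * the (mat_inverse (ctrb_mat n A B)) = Cprod C n (n - 1)"
  shows "Kgain C n A p = en_row n * the (mat_inverse (ctrb_mat n A B)) * Phi_mat n p A
     \<and> (\<forall>s :: real. det (s \<cdot>\<^sub>m 1\<^sub>m n - A + B * Kgain C n A p) = Phi n p s)"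
proof -
  define q where "q = Cprod C n (n - 1)"
  have q: "q \<in> carrier_mat 1 n" using Cprod_carrier[OF Cdim, of "n - 1"] n by (simp add: q_def)
  have ctrb: "ctrb_mat n A B \<in> carrier_mat n n" by (simp add: ctrb_mat_def)
  have en: "en_row n \<in> carrier_mat 1 n" by (simp add: en_row_def)
  have "q * ctrb_mat n A B = en_row n"
    unfolding q_def factor[symmetric]
    by (rule mult_the_mat_inverse_cancel[OF ctrb det_ctrb_mat_nonzero[OF ctrl] en])
  then show ?thesis
    using Kgain_eq[OF n A Cdim] ackermann_char_poly[OF n A B q] factor by (simp add: q_def)
qed

end
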